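(* For every integer $N\ge2$, the polynomial $\Psi_N(X,Y,Z)$ is nonconstant as a polynomial in $Y$.
   Context: $\mathcal{H}=\{\tau\in\mathbb{C}:\operatorname{Im}\tau>0\}$, $q=e^{2\pi i\tau}$; $E_2=1-24\sum\sigma_1(n)q^n$, $E_4=1+240\sum\sigma_3(n)q^n$, $E_6=1-504\sum\sigma_5(n)q^n$; $\Delta=(E_4^3-E_6^2)/1728$, $j=E_4^3/\Delta$, $f=E_4E_6/\Delta$, $E_2^*(\tau)=E_2(\tau)-\frac{3}{\pi\operatorname{Im}\tau}$, $\chi^*=E_2^*f$. For $N\ge1$, $M_N$ denotes the set of primitive integer $2\times2$ matrices of determinant $N$ (acting by Möbius transformations), and $\Psi_N\in\mathbb{Q}[X,Y,Z]$ denotes a nonzero polynomial, irreducible over $\mathbb{C}$, such that $\Psi_N(\chi^*(g\tau),j(\tau),\chi^*(\tau))=0$ for all $g\in M_N$ and $\tau\in\mathcal H$ (constructed by writing the coefficients of $\prod_{g\in D_N}(X-\chi^*(g\tau))$, where $D_N=\{\begin{pmatrix}a&b\\0&d\end{pmatrix}:ad=N,\ 0\le b<d,\ \gcd(a,b,d)=1\}$, as rational functions of $j(\tau),\chi^*(\tau)$ and clearing denominators). *)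

theory Defs
  imports Complex_Main "HOL-Computational_Algebra.Computational_Algebra"
begin

definition sigma :: "nat \<Rightarrow> nat \<Rightarrow> nat" where
  "sigma k n = (\<Sum>d\<in>{d. d dvd n}. d ^ k)"

definition qnome :: "complex \<Rightarrow> complex" where
  "qnome \<tau> = exp (2 * of_real pi * \<i> * \<tau>)"

definition E2 :: "complex \<Rightarrow> complex" where
  "E2 \<tau> = 1 - 24 * (\<Sum>n. of_nat (sigma 1 (Suc n)) * qnome \<tau> ^ Suc n)"

definition E4 :: "complex \<Rightarrow> complex" where
  "E4 \<tau> = 1 + 240 * (\<Sum>n. of_nat (sigma 3 (Suc n)) * qnome \<tau> ^ Suc n)"

definition E6 :: "complex \<Rightarrow> complex" where
  "E6 \<tau> = 1 - 504 * (\<Sum>n. of_nat (sigma 5 (Suc n)) * qnome \<tau> ^ Suc n)"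

definition Delta :: "complex \<Rightarrow> complex" where
  "Delta \<tau> = (E4 \<tau> ^ 3 - E6 \<tau> ^ 2) / 1728"

definition jinv :: "complex \<Rightarrow> complex" where
  "jinv \<tau> = E4 \<tau> ^ 3 / Delta \<tau>"

definition ffun :: "complex \<Rightarrow> complex" where
  "ffun \<tau> = E4 \<tau> * E6 \<tau> / Delta \<tau>"

definition E2star :: "complex \<Rightarrow> complex" where
  "E2star \<tau> = E2 \<tau> - of_real (3 / (pi * Im \<tau>))"

definition chistar :: "complex \<Rightarrow> complex" where
  "chistar \<tau> = E2star \<tau> * ffun \<tau>"

(* integer 2x2 matrices (a,b,c,d) = [[a,b],[c,d]] acting by Moebius transformations *)
definition moeb :: "int \<times> int \<times> int \<times> int \<Rightarrow> complex \<Rightarrow> complex" where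
  "moeb g \<tau> = (case g of (a,b,c,d) \<Rightarrow>
      (of_int a * \<tau> + of_int b) / (of_int c * \<tau> + of_int d))"

definition primmat :: "int \<Rightarrow> (int \<times> int \<times> int \<times> int) set" where
  "primmat N = {(a,b,c,d). a * d - b * c = N \<and> gcd (gcd a b) (gcd c d) = 1}"

(* Polynomials in Q[X,Y,Z] are represented as nested univariate polynomials:
   outermost variable Y, middle variable Z, innermost variable X. *)
definition to_complex3 :: "rat poly poly poly \<Rightarrow> complex poly poly poly" where
  "to_complex3 P = map_poly (map_poly (map_poly of_rat)) P"

definition eval3 :: "rat poly poly poly \<Rightarrow> complex \<Rightarrow> complex \<Rightarrow> complex \<Rightarrow> complex" where
  "eval3 P x y z = poly (poly (poly (to_complex3 P) [:[:y:]:]) [:z:]) x"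

end

theory Submission
  imports Defs "HOL-Library.Landau_Symbols" "HOL-Real_Asymp.Real_Asymp"
begin

text \<open>
  On the imaginary axis \<open>\<tau> = i y\<close> the q-expansions give, with \<open>q = exp (-2\<pi>y)\<close>,
  \<open>\<chi>\<^sup>*(i y) q = 1 - 3/(\<pi> y) + O(q)\<close> as \<open>y \<rightarrow> \<infinity>\<close>. If \<open>\<Psi>\<^sub>N\<close> did not involve \<open>Y\<close>, the
  matrix \<open>diag(N, 1)\<close> would give a nonzero relation \<open>\<Sigma> c\<^sub>l\<^sub>k \<chi>\<^sup>*(i y)\<^sup>l \<chi>\<^sup>*(i N y)\<^sup>k = 0\<close>.
  Give \<open>Z\<^sup>l X\<^sup>k\<close> the weight \<open>l + N k\<close> and multiply the relation by \<open>q\<^sup>D\<close>, \<open>D\<close> the top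
  weight: the monomials of lower weight become \<open>O(q)\<close>, hence so does the top-weight part, a
  polynomial in \<open>1/y\<close> built from \<open>1 - 3/(\<pi> y)\<close> and \<open>1 - 3/(\<pi> N y)\<close>. These two factors have
  different roots, so that polynomial is nonzero, and a nonzero polynomial in \<open>1/y\<close> does not
  decay exponentially.
\<close>

section \<open>Big-O calculus for differences\<close>

lemma bigo_const_mult: "f \<in> O[F](g) \<Longrightarrow> (\<lambda>x. c * f x) \<in> O[F](g)"
  by (cases "c = 0") simp_all

lemma bigo_diff_mult:
  fixes f g f' g' r :: "'a \<Rightarrow> real"
  assumes f: "(\<lambda>x. f x - g x) \<in> O[F](r)" and f': "(\<lambda>x. f' x - g' x) \<in> O[F](r)"
    and g: "g \<in> O[F](\<lambda>_. 1)" and g': "g' \<in> O[F](\<lambda>_. 1)" and r: "r \<in> O[F](\<lambda>_. 1)"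
  shows "(\<lambda>x. f x * f' x - g x * g' x) \<in> O[F](r)"
proof -
  have "(\<lambda>x. f' x - g' x) \<in> O[F](\<lambda>_. 1)" using f' r by (rule landau_o.big_trans)
  with f have "(\<lambda>x. (f x - g x) * (f' x - g' x)) \<in> O[F](\<lambda>x. r x * 1)"
    by (rule landau_o.big.mult)
  moreover have "(\<lambda>x. (f x - g x) * g' x) \<in> O[F](\<lambda>x. r x * 1)"
    using f g' by (rule landau_o.big.mult)
  moreover have "(\<lambda>x. g x * (f' x - g' x)) \<in> O[F](\<lambda>x. 1 * r x)"
    using g f' by (rule landau_o.big.mult)
  ultimately have "(\<lambda>x. (f x - g x) * (f' x - g' x) + (f x - g x) * g' x + g x * (f' x - g' x))
      \<in> O[F](r)"
    by (intro sum_in_bigo) simp_all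
  thus ?thesis by (simp add: algebra_simps)
qed

lemma bigo_diff_power:
  fixes f g r :: "'a \<Rightarrow> real"
  assumes f: "(\<lambda>x. f x - g x) \<in> O[F](r)" and g: "g \<in> O[F](\<lambda>_. 1)" and r: "r \<in> O[F](\<lambda>_. 1)"
  shows "(\<lambda>x. f x ^ m - g x ^ m) \<in> O[F](r)"
proof (induction m)
  case 0
  show ?case by simp
next
  case (Suc m)
  have "(\<lambda>x. g x ^ m) \<in> O[F](\<lambda>_. 1)" using landau_o.big_power[OF g, of m] by simp
  from bigo_diff_mult[OF f Suc g this r] show ?case by simp
qed

lemma bigo_1_from_diff:
  fixes f g r :: "'a \<Rightarrow> real"
  assumes "(\<lambda>x. f x - g x) \<in> O[F](r)" "g \<in> O[F](\<lambda>_. 1)" "r \<in> O[F](\<lambda>_. 1)"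
  shows "f \<in> O[F](\<lambda>_. 1)"
proof -
  have "(\<lambda>x. f x - g x) \<in> O[F](\<lambda>_. 1)" using assms(1,3) by (rule landau_o.big_trans)
  from sum_in_bigo(1)[OF this assms(2)] show ?thesis by simp
qed

text \<open>
  Read \<open>B = Z q\<close> and \<open>A = X q\<^sup>n\<close>: then the summand \<open>i = (l, k)\<close> on the left is
  \<open>q\<^sup>D c Z\<^sup>l X\<^sup>k\<close>, and modulo \<open>O(q)\<close> only the summands of top weight \<open>w i = D\<close> survive.
\<close>
lemma top_weight_sum_bigo:
  fixes B A t s q :: "'a \<Rightarrow> real" and c :: "nat \<times> nat \<Rightarrow> real" and w :: "nat \<times> nat \<Rightarrow> nat"
  assumes B: "(\<lambda>y. B y - t y) \<in> O[F](q)" and A: "(\<lambda>y. A y - s y) \<in> O[F](q)"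
    and t: "t \<in> O[F](\<lambda>_. 1)" and s: "s \<in> O[F](\<lambda>_. 1)" and q: "q \<in> O[F](\<lambda>_. 1)"
    and S: "finite S" and D: "\<And>i. i \<in> S \<Longrightarrow> w i \<le> D"
  shows "(\<lambda>y. (\<Sum>i\<in>S. c i * q y ^ (D - w i) * B y ^ fst i * A y ^ snd i)
      - (\<Sum>i\<in>{i\<in>S. w i = D}. c i * t y ^ fst i * s y ^ snd i)) \<in> O[F](q)"
proof -
  have B1: "B \<in> O[F](\<lambda>_. 1)" and A1: "A \<in> O[F](\<lambda>_. 1)"
    using bigo_1_from_diff B t q bigo_1_from_diff A s q by blast+
  have summand: "(\<lambda>y. c i * q y ^ (D - w i) * B y ^ fst i * A y ^ snd i
      - (if w i = D then c i * t y ^ fst i * s y ^ snd i else 0)) \<in> O[F](q)" if "i \<in> S" for i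
  proof (cases "w i = D")
    case True
    have "(\<lambda>y. B y ^ fst i * A y ^ snd i - t y ^ fst i * s y ^ snd i) \<in> O[F](q)"
      using landau_o.big_power[OF t, of "fst i"] landau_o.big_power[OF s, of "snd i"]
      by (intro bigo_diff_mult bigo_diff_power B A t s q) simp_all
    from bigo_const_mult[OF this, of "c i"] True show ?thesis by (simp add: algebra_simps)
  next
    case False
    with D[OF that] obtain m where m: "D - w i = Suc m" by (metis Suc_diff_Suc le_neq_implies_less)
    have "(\<lambda>y. q y ^ m * B y ^ fst i * A y ^ snd i) \<in> O[F](\<lambda>_. 1)"
      using landau_o.big_power[OF q, of m] landau_o.big_power[OF B1, of "fst i"]
        landau_o.big_power[OF A1, of "snd i"]
      by (intro landau_o.big.mult_in_1) simp_all
    from landau_o.big.mult[OF landau_o.big_refl[of q] this]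
    have "(\<lambda>y. q y * (q y ^ m * B y ^ fst i * A y ^ snd i)) \<in> O[F](q)" by simp
    from bigo_const_mult[OF this, of "c i"] False show ?thesis by (simp add: m algebra_simps)
  qed
  have "(\<lambda>y. \<Sum>i\<in>S. c i * q y ^ (D - w i) * B y ^ fst i * A y ^ snd i
      - (if w i = D then c i * t y ^ fst i * s y ^ snd i else 0)) \<in> O[F](q)"
    by (rule big_sum_in_bigo) (rule summand)
  thus ?thesis
    by (simp add: sum_subtractf sum.inter_filter[OF S])
qed

text \<open>
  Factor out the least power of \<open>1 - a x\<close> and evaluate at \<open>x = 1/a\<close>: only the summand with
  the least first exponent survives.
\<close>
lemma sum_binomial_powers_nonzero:
  fixes a b :: "'a::field" and c :: "nat \<times> nat \<Rightarrow> 'a"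
  assumes "a \<noteq> 0" "b \<noteq> a" and fin: "finite P" and ne: "P \<noteq> {}" and inj: "inj_on fst P"
    and c: "\<And>i. i \<in> P \<Longrightarrow> c i \<noteq> 0"
  shows "(\<Sum>i\<in>P. smult (c i) ([:1, -a:] ^ fst i * [:1, -b:] ^ snd i)) \<noteq> 0"
proof
  assume zero: "(\<Sum>i\<in>P. smult (c i) ([:1, -a:] ^ fst i * [:1, -b:] ^ snd i)) = 0"
  define m where "m = Min (fst ` P)"
  have "m \<in> fst ` P" unfolding m_def using fin ne by simp
  then obtain i0 where i0: "i0 \<in> P" "fst i0 = m" by blast
  have m_le: "m \<le> fst i" if "i \<in> P" for i
    unfolding m_def using fin that by simp
  define g where "g = (\<Sum>i\<in>P. smult (c i) ([:1, -a:] ^ (fst i - m) * [:1, -b:] ^ snd i))"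
  have "(\<Sum>i\<in>P. smult (c i) ([:1, -a:] ^ fst i * [:1, -b:] ^ snd i)) = [:1, -a:] ^ m * g"
    unfolding g_def sum_distrib_left
  proof (rule sum.cong[OF refl])
    fix i assume "i \<in> P"
    hence "[:1, -a:] ^ fst i = [:1, -a:] ^ m * [:1, -a:] ^ (fst i - m)"
      using m_le by (simp flip: power_add)
    thus "smult (c i) ([:1, -a:] ^ fst i * [:1, -b:] ^ snd i)
        = [:1, -a:] ^ m * smult (c i) ([:1, -a:] ^ (fst i - m) * [:1, -b:] ^ snd i)"
      by (simp add: algebra_simps)
  qed
  with zero have "g = 0" by simp
  moreover have "poly g (1 / a) = c i0 * (1 - b / a) ^ snd i0"
  proof -
    have "poly g (1 / a) = (\<Sum>i\<in>P. if i = i0 then c i0 * (1 - b / a) ^ snd i0 else 0)"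
      unfolding g_def poly_sum
    proof (rule sum.cong[OF refl])
      fix i assume i: "i \<in> P"
      have "i = i0 \<longleftrightarrow> fst i - m = 0"
        using inj_on_eq_iff[OF inj i i0(1)] m_le[OF i] i0(2) by auto
      thus "poly (smult (c i) ([:1, -a:] ^ (fst i - m) * [:1, -b:] ^ snd i)) (1 / a)
          = (if i = i0 then c i0 * (1 - b / a) ^ snd i0 else 0)"
        using assms(1) by (auto simp: field_simps)
    qed
    also have "\<dots> = c i0 * (1 - b / a) ^ snd i0" using fin i0(1) by simp
    finally show ?thesis .
  qed
  moreover have "1 - b / a \<noteq> 0" using assms(1,2) by (simp add: field_simps)
  ultimately show False using c[OF i0(1)] by simp
qed

lemma poly_inverse_not_bigo_exp:
  fixes p :: "real poly" and c :: real
  assumes "p \<noteq> 0" and "c > 0"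
  shows "(\<lambda>y. poly p (1 / y)) \<notin> O(\<lambda>y. exp (- c * y))"
proof
  assume big: "(\<lambda>y. poly p (1 / y)) \<in> O(\<lambda>y. exp (- c * y))"
  obtain p' where p: "p = [:- 0, 1:] ^ order 0 p * p'" and "\<not> [:- 0, 1:] dvd p'"
    using order_decomp[OF assms(1)] by blast
  hence p'0: "poly p' 0 \<noteq> 0" by (simp add: poly_eq_0_iff_dvd)
  define j where "j = order 0 p"
  have "((\<lambda>y::real. 1 / y) \<longlongrightarrow> 0) at_top" by real_asymp
  hence "((\<lambda>y. poly p' (1 / y)) \<longlongrightarrow> poly p' 0) at_top"
    by (rule isCont_tendsto_compose[rotated]) (rule poly_isCont)
  hence "(\<lambda>y. poly p' (1 / y)) \<in> \<Theta>(\<lambda>_. 1)" by (intro bigthetaI_tendsto[OF p'0]) simp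
  from landau_theta.mult[OF bigtheta_refl[of "\<lambda>y. (1 / y) ^ j"] this]
  have "(\<lambda>y. (1 / y) ^ j) \<in> \<Theta>(\<lambda>y. poly p (1 / y))"
    by (subst p) (simp add: j_def bigtheta_sym)
  from landau_o.big.bigtheta_trans2[OF this big]
  have "(\<lambda>y. (1 / y) ^ j) \<in> O(\<lambda>y. exp (- c * y))" .
  moreover have "(\<lambda>y. exp (- c * y)) \<in> o(\<lambda>y. (1 / y) ^ j)" using assms(2) by real_asymp
  ultimately have "(\<lambda>y::real. (1 / y) ^ j) \<in> o(\<lambda>y. (1 / y) ^ j)"
    by (rule landau_o.big_small_trans)
  hence "\<forall>\<^sub>F y in at_top. (1 / y :: real) ^ j = 0" by (simp add: landau_o.small_refl_iff)
  moreover have "\<forall>\<^sub>F y in at_top. (y :: real) > 0" by (rule eventually_gt_at_top)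
  ultimately have "\<forall>\<^sub>F y::real in at_top. False" by eventually_elim simp
  thus False by simp
qed

lemma finite_coeff2_support:
  fixes p :: "'a::zero poly poly"
  shows "finite {i. coeff (coeff p (fst i)) (snd i) \<noteq> 0}"
proof (rule finite_subset)
  show "{i. coeff (coeff p (fst i)) (snd i) \<noteq> 0} \<subseteq> (SIGMA l:{..degree p}. {..degree (coeff p l)})"
    by (auto intro: le_degree)
qed auto

lemma poly_poly_const_eq_sum:
  fixes p :: "'a::comm_ring_1 poly poly"
  shows "poly (poly p [:z:]) x = (\<Sum>i\<in>{i. coeff (coeff p (fst i)) (snd i) \<noteq> 0}.
    coeff (coeff p (fst i)) (snd i) * z ^ fst i * x ^ snd i)"
proof -
  have "poly (poly p [:z:]) x = (\<Sum>l\<le>degree p. poly (coeff p l) x * z ^ l)"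
    by (simp add: poly_altdef[of p] poly_sum poly_power)
  also have "\<dots> = (\<Sum>l\<le>degree p. \<Sum>k\<le>degree (coeff p l). coeff (coeff p l) k * z ^ l * x ^ k)"
    by (simp add: poly_altdef[of "coeff p _"] sum_distrib_left sum_distrib_right mult_ac)
  also have "\<dots> = (\<Sum>i\<in>(SIGMA l:{..degree p}. {..degree (coeff p l)}).
      coeff (coeff p (fst i)) (snd i) * z ^ fst i * x ^ snd i)"
    by (subst sum.Sigma) (auto simp: case_prod_beta)
  also have "\<dots> = (\<Sum>i\<in>{i. coeff (coeff p (fst i)) (snd i) \<noteq> 0}.
      coeff (coeff p (fst i)) (snd i) * z ^ fst i * x ^ snd i)"
    by (rule sum.mono_neutral_right) (auto intro: le_degree)
  finally show ?thesis .
qed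

lemma poly_poly_const_weighted_sum:
  fixes p :: "'a::comm_ring_1 poly poly"
  assumes "\<And>i. coeff (coeff p (fst i)) (snd i) \<noteq> 0 \<Longrightarrow> fst i + n * snd i \<le> D"
  shows "r ^ D * poly (poly p [:z:]) x = (\<Sum>i\<in>{i. coeff (coeff p (fst i)) (snd i) \<noteq> 0}.
    coeff (coeff p (fst i)) (snd i) * r ^ (D - (fst i + n * snd i)) * (z * r) ^ fst i
      * (x * r ^ n) ^ snd i)"
  unfolding poly_poly_const_eq_sum sum_distrib_left
proof (rule sum.cong[OF refl])
  fix i assume "i \<in> {i. coeff (coeff p (fst i)) (snd i) \<noteq> 0}"
  hence "D - (fst i + n * snd i) + fst i + n * snd i = D" using assms by fastforce
  hence "r ^ D = r ^ (D - (fst i + n * snd i)) * r ^ fst i * (r ^ n) ^ snd i"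
    by (metis power_add power_mult)
  thus "r ^ D * (coeff (coeff p (fst i)) (snd i) * z ^ fst i * x ^ snd i)
      = coeff (coeff p (fst i)) (snd i) * r ^ (D - (fst i + n * snd i)) * (z * r) ^ fst i
        * (x * r ^ n) ^ snd i"
    by (simp add: power_mult_distrib mult_ac)
qed

lemma of_real_of_rat: "(of_real (of_rat r) :: 'a::real_field) = of_rat r"
  by (cases r) (simp add: of_rat_rat)

lemma eval3_const_poly:
  fixes p :: "rat poly poly"
  shows "eval3 [:p:] (of_real x) w (of_real z)
    = of_real (poly (poly (map_poly (map_poly of_rat) p) [:z:]) x)"
proof -
  have "to_complex3 [:p:] = [:map_poly (map_poly of_rat) p:]"
    by (simp add: to_complex3_def map_poly_pCons)
  thus ?thesis
    by (simp add: eval3_def poly_poly_const_eq_sum of_real_of_rat coeff_map_poly)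
qed

section \<open>The q-expansions near q = 0\<close>

lemma sigma_Suc_0 [simp]: "sigma k (Suc 0) = 1"
proof -
  have "{d. d dvd Suc 0} = {1}" by auto
  thus ?thesis by (simp add: sigma_def)
qed

lemma sigma_le_power: "sigma k (Suc n) \<le> Suc n ^ Suc k"
proof -
  let ?m = "Suc n"
  have divisors: "{d. d dvd ?m} \<subseteq> {1..?m}"
    by (auto intro: dvd_imp_le simp: Suc_le_eq dvd_pos_nat[of ?m])
  have "sigma k ?m \<le> card {d. d dvd ?m} * ?m ^ k"
    unfolding sigma_def using sum_bounded_above[of "{d. d dvd ?m}" "\<lambda>d. d ^ k" "?m ^ k"]
    by (auto intro: power_mono dvd_imp_le)
  also have "\<dots> \<le> ?m * ?m ^ k"
    using card_mono[OF _ divisors] by (intro mult_le_mono1) simp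
  finally show ?thesis by simp
qed

definition divisor_series :: "nat \<Rightarrow> real \<Rightarrow> real" where
  "divisor_series k x = (\<Sum>n. real (sigma k (Suc n)) * x ^ Suc n)"

lemma summable_divisor_series_tail: "summable (\<lambda>n. real (sigma k (n + 2)) * (1/2) ^ n)"
proof (rule summable_comparison_test_bigo)
  show "summable (\<lambda>n. norm ((3/4 :: real) ^ n))" by simp
  have "(\<lambda>n. real (sigma k (n + 2)) * (1/2) ^ n) \<in> O(\<lambda>n. real (n + 2) ^ Suc k * (1/2) ^ n)"
  proof (rule landau_o.big_mono, intro always_eventually allI)
    fix n
    have "real (sigma k (Suc (Suc n))) \<le> real (Suc (Suc n)) ^ Suc k"
      using sigma_le_power[of k "Suc n"] by (metis of_nat_le_iff of_nat_power)
    thus "norm (real (sigma k (n + 2)) * (1/2) ^ n) \<le> norm (real (n + 2) ^ Suc k * (1/2 :: real) ^ n)"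
      by (simp add: mult_right_mono)
  qed
  also have "(\<lambda>n. real (n + 2) ^ Suc k * (1/2) ^ n) \<in> O(\<lambda>n. (3/4) ^ n)"
    by real_asymp
  finally show "(\<lambda>n. real (sigma k (n + 2)) * (1/2) ^ n) \<in> O(\<lambda>n. (3/4) ^ n)" .
qed

lemma divisor_series_split:
  assumes "\<bar>x\<bar> < 1/2"
  shows "summable (\<lambda>n. real (sigma k (Suc n)) * x ^ Suc n)"
    and "divisor_series k x = x + x^2 * (\<Sum>n. real (sigma k (n + 2)) * x ^ n)"
proof -
  let ?f = "\<lambda>n. real (sigma k (Suc n)) * x ^ Suc n"
  have tail: "summable (\<lambda>n. real (sigma k (n + 2)) * x ^ n)"
    using powser_inside[OF summable_divisor_series_tail] assms by simp
  have shift: "(\<lambda>n. ?f (Suc n)) = (\<lambda>n. x^2 * (real (sigma k (n + 2)) * x ^ n))"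
    by (simp add: power2_eq_square algebra_simps)
  have "summable (\<lambda>n. ?f (Suc n))" unfolding shift by (intro summable_mult tail)
  thus summable: "summable ?f" by (rule summable_Suc_iff[THEN iffD1])
  have "divisor_series k x = ?f 0 + (\<Sum>n. ?f (Suc n))"
    unfolding divisor_series_def using suminf_split_head[OF summable] by simp
  also have "(\<Sum>n. ?f (Suc n)) = x^2 * (\<Sum>n. real (sigma k (n + 2)) * x ^ n)"
    unfolding shift by (rule suminf_mult[OF tail])
  finally show "divisor_series k x = x + x^2 * (\<Sum>n. real (sigma k (n + 2)) * x ^ n)" by simp
qed

lemma divisor_series_bigo: "(\<lambda>x. divisor_series k x - x) \<in> O[at 0](\<lambda>x. x^2)"
proof -
  define T where "T x = (\<Sum>n. real (sigma k (n + 2)) * x ^ n)" for x :: real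
  have "isCont T 0"
    unfolding T_def by (rule isCont_powser[OF summable_divisor_series_tail]) simp
  hence "(T \<longlongrightarrow> T 0) (at 0)" by (simp add: isCont_def)
  hence "T \<in> O[at 0](\<lambda>_. 1)" by (intro bigoI_tendsto[where c = "T 0"]) simp_all
  hence "(\<lambda>x. x^2 * T x) \<in> O[at 0](\<lambda>x. x^2 * 1)" by (intro landau_o.big.mult) simp_all
  moreover have "\<forall>\<^sub>F x in at 0. \<bar>x\<bar> < (1/2::real)" by real_asymp
  hence eq: "\<forall>\<^sub>F x in at 0. x^2 * T x = divisor_series k x - x"
    by eventually_elim (simp add: divisor_series_split(2) T_def)
  ultimately show ?thesis by (simp add: landau_o.big.in_cong[OF eq])
qed

lemma divisor_series_bigo_id: "divisor_series k \<in> O[at 0](\<lambda>x. x)"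
proof -
  have "(\<lambda>x::real. x^2) \<in> O[at 0](\<lambda>x. x)" by real_asymp
  with divisor_series_bigo have "(\<lambda>x. divisor_series k x - x) \<in> O[at 0](\<lambda>x. x)"
    by (rule landau_o.big_trans)
  from sum_in_bigo(1)[OF this, of "\<lambda>x. x"] show ?thesis by simp
qed

definition E2_qexp :: "real \<Rightarrow> real" where
  "E2_qexp x = 1 - 24 * divisor_series 1 x"

definition E4_qexp :: "real \<Rightarrow> real" where
  "E4_qexp x = 1 + 240 * divisor_series 3 x"

definition E6_qexp :: "real \<Rightarrow> real" where
  "E6_qexp x = 1 - 504 * divisor_series 5 x"

definition Delta_qexp :: "real \<Rightarrow> real" where
  "Delta_qexp x = (E4_qexp x ^ 3 - E6_qexp x ^ 2) / 1728"

lemma E2_qexp_bigo: "(\<lambda>x. E2_qexp x - 1) \<in> O[at 0](\<lambda>x. x)"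
  unfolding E2_qexp_def using divisor_series_bigo_id by simp

lemma E4_E6_qexp_bigo: "(\<lambda>x. E4_qexp x * E6_qexp x - 1) \<in> O[at 0](\<lambda>x. x)"
proof -
  let ?u = "divisor_series 3" and ?v = "divisor_series 5"
  have "(\<lambda>x. ?u x * ?v x) \<in> O[at 0](\<lambda>x. x * x)"
    by (intro landau_o.big.mult divisor_series_bigo_id)
  also have "(\<lambda>x::real. x * x) \<in> O[at 0](\<lambda>x. x)" by real_asymp
  finally have "(\<lambda>x. 240 * ?u x - 504 * ?v x - 120960 * (?u x * ?v x)) \<in> O[at 0](\<lambda>x. x)"
    using divisor_series_bigo_id by (intro sum_in_bigo) simp_all
  thus ?thesis by (simp add: E4_qexp_def E6_qexp_def algebra_simps)
qed

lemma Delta_qexp_bigo: "(\<lambda>x. Delta_qexp x - x) \<in> O[at 0](\<lambda>x. x^2)"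
proof -
  let ?u = "divisor_series 3" and ?v = "divisor_series 5"
  have u2: "(\<lambda>x. ?u x ^ 2) \<in> O[at 0](\<lambda>x. x^2)" and v2: "(\<lambda>x. ?v x ^ 2) \<in> O[at 0](\<lambda>x. x^2)"
    by (intro landau_o.big_power divisor_series_bigo_id)+
  have "(\<lambda>x. ?u x ^ 3) \<in> O[at 0](\<lambda>x. x^3)"
    by (intro landau_o.big_power divisor_series_bigo_id)
  also have "(\<lambda>x::real. x^3) \<in> O[at 0](\<lambda>x. x^2)" by real_asymp
  finally have u3: "(\<lambda>x. ?u x ^ 3) \<in> O[at 0](\<lambda>x. x^2)" .
  have expand: "Delta_qexp x - x = 5/12 * (?u x - x) + 7/12 * (?v x - x) + 100 * ?u x ^ 2
      + 8000 * ?u x ^ 3 - 147 * ?v x ^ 2" for x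
    by (simp add: Delta_qexp_def E4_qexp_def E6_qexp_def field_simps power2_eq_square
        power3_eq_cube)
  show ?thesis
    unfolding expand
    by (intro sum_in_bigo bigo_const_mult divisor_series_bigo u2 v2 u3)
qed

lemma nome_ffun_qexp_bigo: "(\<lambda>x. x * E4_qexp x * E6_qexp x / Delta_qexp x - 1) \<in> O[at 0](\<lambda>x. x)"
proof -
  have "(\<lambda>x::real. x^2) \<in> o[at 0](\<lambda>x. x)" by real_asymp
  with Delta_qexp_bigo have "Delta_qexp \<sim>[at 0] (\<lambda>x. x)"
    by (intro smallo_imp_asymp_equiv) (rule landau_o.big_small_trans)
  hence x_bigo: "(\<lambda>x. x) \<in> O[at 0](Delta_qexp)"
    by (intro asymp_equiv_imp_bigo) (simp add: asymp_equiv_sym)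
  have x_nz: "\<forall>\<^sub>F x in at 0. (x::real) \<noteq> 0" by (simp add: eventually_at_filter)
  with asymp_equiv_eventually_zeros[OF \<open>Delta_qexp \<sim>[at 0] _\<close>]
  have Delta_nz: "\<forall>\<^sub>F x in at 0. Delta_qexp x \<noteq> 0" by eventually_elim simp
  have "(\<lambda>x. x * (E4_qexp x * E6_qexp x - 1)) \<in> O[at 0](\<lambda>x. x * x)"
    by (intro landau_o.big.mult E4_E6_qexp_bigo) simp
  from sum_in_bigo(2)[OF this Delta_qexp_bigo[unfolded power2_eq_square]]
  have "(\<lambda>x. x * (E4_qexp x * E6_qexp x - 1) - (Delta_qexp x - x)) \<in> O[at 0](\<lambda>x. x^2)"
    by (simp add: power2_eq_square)
  hence "(\<lambda>x. (x * E4_qexp x * E6_qexp x - Delta_qexp x) / Delta_qexp x)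
      \<in> O[at 0](\<lambda>x. x^2 / x)"
    by (intro landau_o.big.divide Delta_nz x_nz x_bigo) (simp add: algebra_simps)
  also have "(\<lambda>x::real. x^2 / x) = (\<lambda>x. x)" by (simp add: power2_eq_square fun_eq_iff)
  finally have "(\<lambda>x. (x * E4_qexp x * E6_qexp x - Delta_qexp x) / Delta_qexp x)
      \<in> O[at 0](\<lambda>x. x)" .
  moreover from Delta_nz have eq: "\<forall>\<^sub>F x in at 0.
      (x * E4_qexp x * E6_qexp x - Delta_qexp x) / Delta_qexp x
        = x * E4_qexp x * E6_qexp x / Delta_qexp x - 1"
    by eventually_elim (simp add: diff_divide_distrib)
  ultimately show ?thesis by (simp add: landau_o.big.in_cong[OF eq])
qed

section \<open>\<open>\<chi>\<^sup>*\<close> on the imaginary axis\<close>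

definition nome_imag :: "real \<Rightarrow> real" where
  "nome_imag y = exp (-2 * pi * y)"

definition chistar_imag :: "real \<Rightarrow> real" where
  "chistar_imag y = (E2_qexp (nome_imag y) - 3 / (pi * y))
     * (E4_qexp (nome_imag y) * E6_qexp (nome_imag y) / Delta_qexp (nome_imag y))"

lemma qnome_imag: "qnome (\<i> * of_real y) = of_real (nome_imag y)"
proof -
  have "2 * of_real pi * \<i> * (\<i> * of_real y) = (of_real (-2 * pi * y) :: complex)"
    by (simp add: algebra_simps)
  thus ?thesis unfolding qnome_def nome_imag_def by (simp only: exp_of_real)
qed

lemma divisor_series_of_real:
  assumes "\<bar>x\<bar> < 1/2"
  shows "(\<Sum>n. of_nat (sigma k (Suc n)) * (of_real x :: complex) ^ Suc n) = of_real (divisor_series k x)"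
proof -
  have "of_real (divisor_series k x) = (\<Sum>n. of_real (real (sigma k (Suc n)) * x ^ Suc n) :: complex)"
    unfolding divisor_series_def by (rule suminf_of_real[OF divisor_series_split(1)[OF assms]])
  thus ?thesis by simp
qed

lemma chistar_imag:
  assumes "y > 0" "nome_imag y < 1/2"
  shows "chistar (\<i> * of_real y) = of_real (chistar_imag y)"
proof -
  have "\<bar>nome_imag y\<bar> < 1/2" using assms(2) by (simp add: nome_imag_def)
  note series = divisor_series_of_real[OF this]
  show ?thesis
    unfolding chistar_def E2star_def ffun_def Delta_def E2_def E4_def E6_def qnome_imag series
      chistar_imag_def E2_qexp_def E4_qexp_def E6_qexp_def Delta_qexp_def
    by simp
qed

lemma nome_imag_at_0: "filterlim nome_imag (at 0) at_top"
  unfolding nome_imag_def by real_asymp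

lemma chistar_imag_asymp: "(\<lambda>y. chistar_imag y * nome_imag y - (1 - 3 / (pi * y))) \<in> O(nome_imag)"
proof -
  define M where "M x = x * E4_qexp x * E6_qexp x / Delta_qexp x" for x
  define t where "t y = 1 - 3 / (pi * y)" for y
  have M1: "(\<lambda>y. M (nome_imag y) - 1) \<in> O(nome_imag)"
    unfolding M_def using landau_o.big.compose[OF nome_ffun_qexp_bigo nome_imag_at_0] .
  have E2: "(\<lambda>y. E2_qexp (nome_imag y) - 1) \<in> O(nome_imag)"
    using landau_o.big.compose[OF E2_qexp_bigo nome_imag_at_0] .
  have "(\<lambda>x::real. x) \<in> O[at 0](\<lambda>_. 1)" by real_asymp
  with nome_ffun_qexp_bigo have "(\<lambda>x. M x - 1) \<in> O[at 0](\<lambda>_. 1)"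
    unfolding M_def by (rule landau_o.big_trans)
  from sum_in_bigo(1)[OF this bigo_const[of 1]]
  have M: "(\<lambda>y. M (nome_imag y)) \<in> O(\<lambda>_. 1)"
    using landau_o.big.compose[OF _ nome_imag_at_0] by simp
  have t: "t \<in> O(\<lambda>_. 1)" unfolding t_def by real_asymp
  have "(\<lambda>y. (E2_qexp (nome_imag y) - 1) * M (nome_imag y) + t y * (M (nome_imag y) - 1))
      \<in> O(nome_imag)"
    using landau_o.big.mult[OF E2 M] landau_o.big.mult[OF t M1] by (intro sum_in_bigo) simp_all
  moreover have "chistar_imag y * nome_imag y - t y
      = (E2_qexp (nome_imag y) - 1) * M (nome_imag y) + t y * (M (nome_imag y) - 1)" for y
  proof -
    have ring: "(e - s) * m - (1 - s) = (e - 1) * m + (1 - s) * (m - 1)" for e s m :: real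
      by (simp add: algebra_simps)
    have "chistar_imag y * nome_imag y = (E2_qexp (nome_imag y) - 3 / (pi * y)) * M (nome_imag y)"
      unfolding chistar_imag_def M_def by (simp add: ac_simps)
    thus ?thesis unfolding t_def by (simp only: ring)
  qed
  ultimately show ?thesis unfolding t_def by simp
qed

lemma asymp_dilation:
  fixes f :: "real \<Rightarrow> real" and n :: nat
  assumes f: "(\<lambda>y. f y * nome_imag y - (1 - a / y)) \<in> O(nome_imag)" and "n > 0"
  shows "(\<lambda>y. f (real n * y) * nome_imag y ^ n - (1 - a / (real n * y))) \<in> O(nome_imag)"
proof -
  have dilate: "filterlim (\<lambda>y. real n * y) at_top at_top"
    using assms(2) by (intro filterlim_tendsto_pos_mult_at_top[OF tendsto_const _ filterlim_ident]) auto
  have nome_dilate: "nome_imag (real n * y) = nome_imag y ^ n" for y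
    unfolding nome_imag_def by (simp flip: exp_of_nat_mult add: ac_simps)
  have "(\<lambda>y. f (real n * y) * nome_imag y ^ n - (1 - a / (real n * y))) \<in> O(\<lambda>y. nome_imag y ^ n)"
    using landau_o.big.compose[OF f dilate] by (simp add: nome_dilate)
  also have "(\<lambda>y. nome_imag y ^ n) \<in> O(nome_imag)"
  proof -
    have "nome_imag \<in> O(\<lambda>_. 1)" unfolding nome_imag_def by real_asymp
    from landau_o.big.mult[OF landau_o.big_refl[of nome_imag] landau_o.big_power[OF this, of "n - 1"]]
    show ?thesis using assms(2) by (simp flip: power_Suc)
  qed
  finally show ?thesis .
qed

lemma quasi_homogeneous_not_bigo_nome:
  fixes c :: "nat \<times> nat \<Rightarrow> real" and n D :: nat
  assumes n: "n \<ge> 2" and a: "a \<noteq> 0" and fin: "finite P" and ne: "P \<noteq> {}"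
    and c: "\<And>i. i \<in> P \<Longrightarrow> c i \<noteq> 0" and D: "\<And>i. i \<in> P \<Longrightarrow> fst i + n * snd i = D"
  shows "(\<lambda>y. \<Sum>i\<in>P. c i * (1 - a / y) ^ fst i * (1 - (a / real n) / y) ^ snd i) \<notin> O(nome_imag)"
proof
  define h where "h = (\<Sum>i\<in>P. smult (c i) ([:1, -a:] ^ fst i * [:1, - (a / real n):] ^ snd i))"
  assume "(\<lambda>y. \<Sum>i\<in>P. c i * (1 - a / y) ^ fst i * (1 - (a / real n) / y) ^ snd i) \<in> O(nome_imag)"
  moreover have "poly h (1 / y) = (\<Sum>i\<in>P. c i * (1 - a / y) ^ fst i * (1 - (a / real n) / y) ^ snd i)"
    for y
    by (simp add: h_def poly_sum field_simps)
  moreover have "nome_imag = (\<lambda>y. exp (- (2 * pi) * y))" by (simp add: fun_eq_iff nome_imag_def)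
  moreover have "h \<noteq> 0"
    unfolding h_def
  proof (rule sum_binomial_powers_nonzero[OF a _ fin ne _ c])
    show "a / real n \<noteq> a" using a n by (simp add: field_simps)
    show "inj_on fst P"
    proof (rule inj_onI)
      fix i j assume "i \<in> P" "j \<in> P" "fst i = fst j"
      hence "n * snd i = n * snd j" using D[of i] D[of j] by linarith
      with n \<open>fst i = fst j\<close> show "i = j" by (simp add: prod_eq_iff)
    qed
  qed
  ultimately show False using poly_inverse_not_bigo_exp[of h "2 * pi"] by simp
qed

lemma no_polynomial_relation_dilation:
  fixes f :: "real \<Rightarrow> real" and p :: "real poly poly" and n :: nat and a :: real
  assumes n: "n \<ge> 2" and a: "a \<noteq> 0" and p: "p \<noteq> 0"
    and f: "(\<lambda>y. f y * nome_imag y - (1 - a / y)) \<in> O(nome_imag)"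
  shows "\<not> (\<forall>\<^sub>F y in at_top. poly (poly p [:f y:]) (f (real n * y)) = 0)"
proof
  assume rel: "\<forall>\<^sub>F y in at_top. poly (poly p [:f y:]) (f (real n * y)) = 0"
  define q where "q = nome_imag"
  define t where "t y = 1 - a / y" for y :: real
  define s where "s y = 1 - (a / real n) / y" for y :: real
  define c where "c i = coeff (coeff p (fst i)) (snd i)" for i
  define S where "S = {i. c i \<noteq> 0}"
  define w where "w i = fst i + n * snd i" for i
  define D where "D = Max (w ` S)"
  define SD where "SD = {i \<in> S. w i = D}"
  define H where "H y = (\<Sum>i\<in>SD. c i * t y ^ fst i * s y ^ snd i)" for y
  have S: "finite S" unfolding S_def c_def by (rule finite_coeff2_support)
  obtain l where "coeff p l \<noteq> 0" using p by (metis leading_coeff_0_iff)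
  then obtain k where "c (l, k) \<noteq> 0" unfolding c_def by (metis leading_coeff_0_iff fst_conv snd_conv)
  hence "S \<noteq> {}" unfolding S_def by blast
  hence "D \<in> w ` S" unfolding D_def using S by simp
  hence "SD \<noteq> {}" unfolding SD_def by blast
  have wD: "w i \<le> D" if "i \<in> S" for i unfolding D_def using S that by simp
  have top: "(\<lambda>y. (\<Sum>i\<in>S. c i * q y ^ (D - w i) * (f y * q y) ^ fst i
      * (f (real n * y) * q y ^ n) ^ snd i) - H y) \<in> O(q)"
    unfolding H_def SD_def
  proof (rule top_weight_sum_bigo[OF _ _ _ _ _ S wD])
    show "(\<lambda>y. f y * q y - t y) \<in> O(q)" using f unfolding t_def q_def .
    show "(\<lambda>y. f (real n * y) * q y ^ n - s y) \<in> O(q)"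
      using asymp_dilation[OF f] n unfolding s_def q_def by simp
    show "t \<in> O(\<lambda>_. 1)" "s \<in> O(\<lambda>_. 1)" "q \<in> O(\<lambda>_. 1)"
      unfolding t_def s_def q_def nome_imag_def by real_asymp+
  qed
  from rel have "\<forall>\<^sub>F y in at_top. (\<Sum>i\<in>S. c i * q y ^ (D - w i) * (f y * q y) ^ fst i
      * (f (real n * y) * q y ^ n) ^ snd i) - H y = - H y"
  proof eventually_elim
    case (elim y)
    have "q y ^ D * poly (poly p [:f y:]) (f (real n * y)) = (\<Sum>i\<in>S. c i * q y ^ (D - w i)
        * (f y * q y) ^ fst i * (f (real n * y) * q y ^ n) ^ snd i)"
      unfolding S_def c_def w_def
      by (rule poly_poly_const_weighted_sum) (use wD in \<open>simp add: S_def c_def w_def\<close>)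
    with elim show ?case by simp
  qed
  from landau_o.big.in_cong[OF this] top have "H \<in> O(nome_imag)" by (simp add: q_def)
  moreover have "H \<notin> O(nome_imag)"
    unfolding H_def t_def s_def
  proof (rule quasi_homogeneous_not_bigo_nome[OF n a _ \<open>SD \<noteq> {}\<close>])
    show "finite SD" using S by (simp add: SD_def)
  qed (simp_all add: SD_def S_def w_def)
  ultimately show False by contradiction
qed

lemma relation_on_imag_axis:
  fixes p :: "rat poly poly" and n :: nat
  assumes "n > 0"
    and rel: "\<And>\<tau>. Im \<tau> > 0 \<Longrightarrow> eval3 [:p:] (chistar (moeb (int n, 0, 0, 1) \<tau>)) (jinv \<tau>) (chistar \<tau>) = 0"
  shows "\<forall>\<^sub>F y in at_top.
    poly (poly (map_poly (map_poly of_rat) p) [:chistar_imag y:]) (chistar_imag (real n * y)) = 0"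
proof -
  have "\<forall>\<^sub>F y in at_top. y > 0 \<and> nome_imag y < 1/2"
    unfolding nome_imag_def by (intro eventually_conj; real_asymp)
  thus ?thesis
  proof eventually_elim
    case (elim y)
    hence y: "y > 0" "nome_imag y < 1/2" by simp_all
    have ny: "real n * y > 0" "nome_imag (real n * y) < 1/2"
      using y assms(1) by (auto simp: nome_imag_def mult_le_cancel_right1 intro: le_less_trans[rotated])
    have "moeb (int n, 0, 0, 1) (\<i> * of_real y) = \<i> * of_real (real n * y)"
      by (simp add: moeb_def)
    with rel[of "\<i> * of_real y"] y
    have "eval3 [:p:] (chistar (\<i> * of_real (real n * y))) (jinv (\<i> * of_real y))
        (chistar (\<i> * of_real y)) = 0"
      by simp
    thus ?case unfolding chistar_imag[OF ny] chistar_imag[OF y] eval3_const_poly by simp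
  qed
qed

theorem mainTheorem9:
  fixes N :: int and Psi :: "rat poly poly poly"
  assumes "N \<ge> 2"
    and "Psi \<noteq> 0"
    and "irreducible (to_complex3 Psi)"
    and "\<forall>g\<in>primmat N. \<forall>\<tau>. Im \<tau> > 0 \<longrightarrow>
           eval3 Psi (chistar (moeb g \<tau>)) (jinv \<tau>) (chistar \<tau>) = 0"
  shows "degree Psi > 0"
proof (rule ccontr)
  assume "\<not> degree Psi > 0"
  then obtain p where Psi: "Psi = [:p:]" by (metis degree_0_id neq0_conv)
  define n where "n = nat N"
  have N: "N = int n" "n \<ge> 2" using assms(1) by (simp_all add: n_def)
  have "(N, 0, 0, 1) \<in> primmat N" by (simp add: primmat_def)
  with assms(4) have rel: "\<forall>\<^sub>F y in at_top.
      poly (poly (map_poly (map_poly of_rat) p) [:chistar_imag y:]) (chistar_imag (real n * y)) = 0"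
    by (intro relation_on_imag_axis) (use N in \<open>simp_all add: Psi\<close>)
  have nonzero: "(map_poly (map_poly of_rat) p :: real poly poly) \<noteq> 0"
    using assms(2) by (simp add: Psi map_poly_eq_0_iff)
  have "(\<lambda>y. chistar_imag y * nome_imag y - (1 - (3 / pi) / y)) \<in> O(nome_imag)"
    using chistar_imag_asymp by simp
  from no_polynomial_relation_dilation[OF N(2) _ nonzero this] rel show False by simp
qed

end
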